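(* Let $P_n,P^*\in\Delta(\Delta(V))$ with $P_n\to P^*$ weakly. For $p\in\mathbb{R}$ and $P\in\Delta(\Delta(V))$ define $\pi(p,P)=\int_{\{\nu:\ \mathbb{E}_\nu[v]\ge p\}}(p-\mathbb{E}_\nu[c(v)])\,dP(\nu)$. Then for all $p\in\mathbb{R}$ and $\delta>0$, $$\limsup_{n\to\infty}\pi(p+\delta,P_n)-\delta\ \le\ \pi(p,P^* )\ \le\ \liminf_{n\to\infty}\pi(p-\delta,P_n)+\delta.$$
   Context: $V\subset\mathbb{R}$ is compact and $c:V\to\mathbb{R}$ is continuous with $v-c(v)\ge0$ for all $v\in V$. $\Delta(V)$ is the set of Borel probability measures on $V$ with the weak topology, and $\Delta(\Delta(V))$ the Borel probability measures on $\Delta(V)$, with weak convergence. *)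

theory Defs
  imports "HOL-Probability.Probability"
begin

definition Delta :: "real set \<Rightarrow> real measure set" where
  "Delta V = {\<nu>. prob_space \<nu> \<and> sets \<nu> = sets (restrict_space borel V)}"

definition weak_top_Delta :: "real set \<Rightarrow> real measure topology" where
  "weak_top_Delta V = topology_generated_by
     {{\<nu> \<in> Delta V. (\<integral>x. f x \<partial>\<nu>) \<in> U} | (f :: real \<Rightarrow> real) U. continuous_on V f \<and> open U}"

definition borel_of_top :: "'a topology \<Rightarrow> 'a measure" where
  "borel_of_top X = sigma (topspace X) {U. openin X U}"

definition DeltaDelta :: "real set \<Rightarrow> real measure measure set" where
  "DeltaDelta V = {P. prob_space P \<and> sets P = sets (borel_of_top (weak_top_Delta V))}"

definition weak_conv_DD :: "real set \<Rightarrow> (nat \<Rightarrow> real measure measure) \<Rightarrow> real measure measure \<Rightarrow> bool" where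
  "weak_conv_DD V P Q \<longleftrightarrow>
     (\<forall>f. continuous_map (weak_top_Delta V) euclideanreal f \<and>
          (\<exists>B. \<forall>\<nu>\<in>topspace (weak_top_Delta V). \<bar>f \<nu>\<bar> \<le> B) \<longrightarrow>
          (\<lambda>n. \<integral>\<nu>. f \<nu> \<partial>(P n)) \<longlonglongrightarrow> (\<integral>\<nu>. f \<nu> \<partial>Q))"

definition profit :: "(real \<Rightarrow> real) \<Rightarrow> real \<Rightarrow> real measure measure \<Rightarrow> real" where
  "profit c p P = (\<integral>\<nu>\<in>{\<nu> \<in> space P. (\<integral>v. v \<partial>\<nu>) \<ge> p}. (p - (\<integral>v. c v \<partial>\<nu>)) \<partial>P)"

end

theory Submission
  imports Defs
begin

text \<open>The indicator of \<open>{\<nu>. q \<le> E\<^sub>\<nu>[v]}\<close> makes \<open>\<pi>(q, \<cdot>)\<close> discontinuous for the weak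
  topology, so replace it by the ramp rising linearly from 0 at \<open>E\<^sub>\<nu>[v] = q - \<delta>\<close> to 1 at
  \<open>E\<^sub>\<nu>[v] = q\<close>. Since \<open>E\<^sub>\<nu>[c] \<le> E\<^sub>\<nu>[v]\<close>, the payoff \<open>q - E\<^sub>\<nu>[c]\<close> is nonnegative wherever the
  ramp is positive, and the smoothed integrand \<open>g\<^sub>q\<close> satisfies
  \<open>\<pi>(q, P) \<le> \<integral>g\<^sub>q dP \<le> \<pi>(q - \<delta>, P) + \<delta>\<close> for every \<open>P\<close>. As \<open>g\<^sub>q\<close> is bounded and weakly
  continuous, \<open>\<integral>g\<^sub>q dP\<^sub>n \<rightarrow> \<integral>g\<^sub>q dP\<^sup>*\<close>; taking \<open>q = p + \<delta>\<close> bounds the limsup and \<open>q = p\<close>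
  the liminf.\<close>

lemma topspace_weak_top_Delta: "topspace (weak_top_Delta V) = Delta V"
proof -
  have "Delta V \<in> {{\<nu> \<in> Delta V. (\<integral>x. f x \<partial>\<nu>) \<in> U} | (f :: real \<Rightarrow> real) U. continuous_on V f \<and> open U}"
    by (rule CollectI, rule exI[of _ "\<lambda>_. 0"], rule exI[of _ UNIV]) auto
  then show ?thesis unfolding weak_top_Delta_def topology_generated_by_topspace by blast
qed

lemma continuous_map_integral_weak_top_Delta:
  assumes "continuous_on V f"
  shows "continuous_map (weak_top_Delta V) euclideanreal (\<lambda>\<nu>. \<integral>x. f x \<partial>\<nu>)"
  unfolding continuous_map_def topspace_weak_top_Delta
proof (intro conjI allI impI)
  fix U :: "real set" assume "openin euclideanreal U"
  then have "{\<nu> \<in> Delta V. (\<integral>x. f x \<partial>\<nu>) \<in> U} \<in> {{\<nu> \<in> Delta V. (\<integral>x. f x \<partial>\<nu>) \<in> U} | (f :: real \<Rightarrow> real) U. continuous_on V f \<and> open U}"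
    using assms by auto
  then show "openin (weak_top_Delta V) {\<nu> \<in> Delta V. (\<integral>x. f x \<partial>\<nu>) \<in> U}"
    unfolding weak_top_Delta_def by (rule topology_generated_by_Basis)
qed auto

lemma space_borel_of_top: "space (borel_of_top X) = topspace X"
  unfolding borel_of_top_def by (rule space_measure_of) (auto dest: openin_subset)

lemma sets_borel_of_top_openin: "openin X U \<Longrightarrow> U \<in> sets (borel_of_top X)"
  unfolding borel_of_top_def by (rule in_measure_of) (auto dest: openin_subset)

lemma borel_measurable_borel_of_top:
  assumes "continuous_map X euclideanreal f"
  shows "f \<in> borel_measurable (borel_of_top X)"
proof (rule borel_measurableI)
  fix S :: "real set" assume "open S"
  then have "openin X {x \<in> topspace X. f x \<in> S}"
    using assms by (simp add: continuous_map_def)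
  moreover have "f -` S \<inter> space (borel_of_top X) = {x \<in> topspace X. f x \<in> S}"
    by (auto simp: space_borel_of_top)
  ultimately show "f -` S \<inter> space (borel_of_top X) \<in> sets (borel_of_top X)"
    by (simp add: sets_borel_of_top_openin)
qed

lemma space_Delta:
  assumes "\<nu> \<in> Delta V"
  shows "space \<nu> = V"
proof -
  have "space \<nu> = space (restrict_space borel V)"
    using assms unfolding Delta_def by (intro sets_eq_imp_space_eq) simp
  then show ?thesis by (simp add: space_restrict_space)
qed

lemma integrable_Delta:
  fixes f :: "real \<Rightarrow> real"
  assumes "compact V" "continuous_on V f" "\<nu> \<in> Delta V"
  shows "integrable \<nu> f"
proof -
  interpret prob_space \<nu> using assms(3) by (simp add: Delta_def)
  obtain B where "\<And>x. x \<in> V \<Longrightarrow> \<bar>f x\<bar> \<le> B"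
    using continuous_on_compact_bound[OF assms(1,2)] by auto
  moreover have "f \<in> borel_measurable \<nu>"
    using borel_measurable_continuous_on_restrict[OF assms(2)] assms(3)
    by (simp add: Delta_def cong: measurable_cong_sets)
  ultimately show ?thesis
    by (intro integrable_const_bound[where B=B]) (auto simp: space_Delta[OF assms(3)])
qed

lemma bounded_integral_Delta:
  fixes f :: "real \<Rightarrow> real"
  assumes "compact V" "continuous_on V f"
  obtains B where "\<And>\<nu>. \<nu> \<in> Delta V \<Longrightarrow> \<bar>\<integral>x. f x \<partial>\<nu>\<bar> \<le> B"
proof -
  obtain B where B: "\<And>x. x \<in> V \<Longrightarrow> \<bar>f x\<bar> \<le> B"
    using continuous_on_compact_bound[OF assms] by auto
  have "\<bar>\<integral>x. f x \<partial>\<nu>\<bar> \<le> B" if "\<nu> \<in> Delta V" for \<nu>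
  proof -
    interpret prob_space \<nu> using that by (simp add: Delta_def)
    have "\<bar>\<integral>x. f x \<partial>\<nu>\<bar> \<le> (\<integral>x. \<bar>f x\<bar> \<partial>\<nu>)" by (rule integral_abs_bound)
    also have "\<dots> \<le> B"
      using B integrable_Delta[OF assms that]
      by (intro integral_le_const) (auto simp: space_Delta[OF that])
    finally show ?thesis .
  qed
  then show ?thesis using that by blast
qed

lemma space_DeltaDelta:
  assumes "P \<in> DeltaDelta V"
  shows "space P = Delta V"
proof -
  have "space P = space (borel_of_top (weak_top_Delta V))"
    using assms unfolding DeltaDelta_def by (intro sets_eq_imp_space_eq) simp
  then show ?thesis by (simp only: space_borel_of_top topspace_weak_top_Delta)
qed

lemma borel_measurable_DeltaDelta:
  assumes "P \<in> DeltaDelta V" "continuous_map (weak_top_Delta V) euclideanreal f"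
  shows "f \<in> borel_measurable P"
  using borel_measurable_borel_of_top[OF assms(2)] assms(1)
  by (simp add: DeltaDelta_def cong: measurable_cong_sets)

lemma integrable_DeltaDelta:
  fixes f :: "real measure \<Rightarrow> real"
  assumes "P \<in> DeltaDelta V" "f \<in> borel_measurable P" "\<And>\<nu>. \<nu> \<in> Delta V \<Longrightarrow> \<bar>f \<nu>\<bar> \<le> B"
  shows "integrable P f"
proof -
  interpret prob_space P using assms(1) by (simp add: DeltaDelta_def)
  show ?thesis
    using assms(2,3)
    by (intro integrable_const_bound[where B=B]) (auto simp: space_DeltaDelta[OF assms(1)])
qed

definition ramp :: "real \<Rightarrow> real \<Rightarrow> real" where
  "ramp \<delta> x = max 0 (min 1 (x / \<delta>))"

lemma continuous_map_ramp [continuous_intros]: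
  "continuous_map X euclideanreal f \<Longrightarrow> continuous_map X euclideanreal (\<lambda>x. ramp \<delta> (f x))"
  unfolding ramp_def
  by (cases "\<delta> = 0") (auto intro!: continuous_map_real_max continuous_map_real_min continuous_map_real_divide)

lemma ramp_payoff_bounds:
  fixes k m q \<delta> :: real
  assumes "k \<le> m" "\<delta> > 0"
  shows "(if q \<le> m then q - k else 0) \<le> ramp \<delta> (m - (q - \<delta>)) * (q - k)" (is ?lower)
    and "ramp \<delta> (m - (q - \<delta>)) * (q - k) \<le> (if q - \<delta> \<le> m then q - \<delta> - k else 0) + \<delta>" (is ?upper)
proof -
  consider "q \<le> m" | "q - \<delta> \<le> m" "m < q" | "m < q - \<delta>" by linarith
  then have "?lower \<and> ?upper"
  proof cases
    case 1
    then have "ramp \<delta> (m - (q - \<delta>)) = 1" using assms by (simp add: ramp_def field_simps)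
    then show ?thesis using 1 assms by simp
  next
    case 2
    have "0 \<le> ramp \<delta> (m - (q - \<delta>))" "ramp \<delta> (m - (q - \<delta>)) \<le> 1" by (simp_all add: ramp_def)
    moreover have "q - k \<ge> 0" using 2 assms by simp
    ultimately show ?thesis
      using 2 mult_right_mono[of "ramp \<delta> (m - (q - \<delta>))" 1 "q - k"] by simp
  next
    case 3
    then have "ramp \<delta> (m - (q - \<delta>)) = 0" using assms by (simp add: ramp_def field_simps)
    then show ?thesis using 3 assms by simp
  qed
  then show ?lower ?upper by blast+
qed

definition smoothed_payoff :: "(real \<Rightarrow> real) \<Rightarrow> real \<Rightarrow> real \<Rightarrow> real measure \<Rightarrow> real" where
  "smoothed_payoff c q \<delta> \<nu> = ramp \<delta> ((\<integral>v. v \<partial>\<nu>) - (q - \<delta>)) * (q - (\<integral>v. c v \<partial>\<nu>))"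

lemma continuous_map_smoothed_payoff:
  assumes "continuous_on V c"
  shows "continuous_map (weak_top_Delta V) euclideanreal (smoothed_payoff c q \<delta>)"
  unfolding smoothed_payoff_def
  by (intro continuous_intros continuous_map_integral_weak_top_Delta assms continuous_on_id)

lemma bounded_smoothed_payoff:
  assumes "compact V" "continuous_on V c"
  obtains B where "\<And>\<nu>. \<nu> \<in> Delta V \<Longrightarrow> \<bar>smoothed_payoff c q \<delta> \<nu>\<bar> \<le> B"
proof -
  obtain B where B: "\<And>\<nu>. \<nu> \<in> Delta V \<Longrightarrow> \<bar>\<integral>v. c v \<partial>\<nu>\<bar> \<le> B"
    using bounded_integral_Delta[OF assms] by blast
  have "\<bar>smoothed_payoff c q \<delta> \<nu>\<bar> \<le> \<bar>q\<bar> + B" if "\<nu> \<in> Delta V" for \<nu>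
  proof -
    let ?r = "ramp \<delta> ((\<integral>v. v \<partial>\<nu>) - (q - \<delta>))"
    have "\<bar>smoothed_payoff c q \<delta> \<nu>\<bar> = \<bar>?r\<bar> * \<bar>q - (\<integral>v. c v \<partial>\<nu>)\<bar>"
      by (simp add: smoothed_payoff_def abs_mult)
    also have "\<dots> \<le> \<bar>q - (\<integral>v. c v \<partial>\<nu>)\<bar>"
      using mult_right_mono[of "\<bar>?r\<bar>" 1] by (simp add: ramp_def)
    also have "\<dots> \<le> \<bar>q\<bar> + B"
      using B[OF that] by linarith
    finally show ?thesis .
  qed
  then show ?thesis using that by blast
qed

lemma profit_eq_integral:
  "profit c q P = (\<integral>\<nu>. (if q \<le> (\<integral>v. v \<partial>\<nu>) then q - (\<integral>v. c v \<partial>\<nu>) else 0) \<partial>P)"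
  unfolding profit_def set_lebesgue_integral_def
  by (intro Bochner_Integration.integral_cong) (auto simp: indicator_def)

lemma integrable_profit_integrand:
  assumes "compact V" "continuous_on V c" "P \<in> DeltaDelta V"
  shows "integrable P (\<lambda>\<nu>. if q \<le> (\<integral>v. v \<partial>\<nu>) then q - (\<integral>v. c v \<partial>\<nu>) else 0)"
proof -
  obtain B where B: "\<And>\<nu>. \<nu> \<in> Delta V \<Longrightarrow> \<bar>\<integral>v. c v \<partial>\<nu>\<bar> \<le> B"
    using bounded_integral_Delta[OF assms(1,2)] by blast
  have [measurable]: "(\<lambda>\<nu>. \<integral>v. v \<partial>\<nu>) \<in> borel_measurable P" "(\<lambda>\<nu>. \<integral>v. c v \<partial>\<nu>) \<in> borel_measurable P"
    by (intro borel_measurable_DeltaDelta[OF assms(3)] continuous_map_integral_weak_top_Delta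
        continuous_on_id assms(2))+
  show ?thesis
  proof (rule integrable_DeltaDelta[OF assms(3), where B="\<bar>q\<bar> + B"])
    fix \<nu> assume "\<nu> \<in> Delta V"
    with B[OF this] show "\<bar>if q \<le> (\<integral>v. v \<partial>\<nu>) then q - (\<integral>v. c v \<partial>\<nu>) else 0\<bar> \<le> \<bar>q\<bar> + B"
      by auto
  qed simp
qed

lemma integral_cost_le_integral_value:
  assumes "compact V" "continuous_on V c" "\<forall>v\<in>V. v - c v \<ge> 0" "\<nu> \<in> Delta V"
  shows "(\<integral>v. c v \<partial>\<nu>) \<le> (\<integral>v. v \<partial>\<nu>)"
  using assms integrable_Delta[OF assms(1) _ assms(4)]
  by (intro integral_mono) (auto simp: space_Delta)

lemma integrable_smoothed_payoff:
  assumes "compact V" "continuous_on V c" "P \<in> DeltaDelta V"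
  shows "integrable P (smoothed_payoff c q \<delta>)"
proof -
  obtain B where "\<And>\<nu>. \<nu> \<in> Delta V \<Longrightarrow> \<bar>smoothed_payoff c q \<delta> \<nu>\<bar> \<le> B"
    using bounded_smoothed_payoff[OF assms(1,2)] by blast
  then show ?thesis
    by (intro integrable_DeltaDelta[OF assms(3)] borel_measurable_DeltaDelta[OF assms(3)]
        continuous_map_smoothed_payoff assms(2))
qed

lemma profit_le_integral_smoothed_payoff:
  assumes "compact V" "continuous_on V c" "\<forall>v\<in>V. v - c v \<ge> 0" "\<delta> > 0" "P \<in> DeltaDelta V"
  shows "profit c q P \<le> (\<integral>\<nu>. smoothed_payoff c q \<delta> \<nu> \<partial>P)"
  unfolding profit_eq_integral
proof (rule integral_mono)
  fix \<nu> assume "\<nu> \<in> space P"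
  then have "\<nu> \<in> Delta V" by (simp add: space_DeltaDelta[OF assms(5)])
  from ramp_payoff_bounds(1)[OF integral_cost_le_integral_value[OF assms(1-3) this] assms(4)]
  show "(if q \<le> (\<integral>v. v \<partial>\<nu>) then q - (\<integral>v. c v \<partial>\<nu>) else 0) \<le> smoothed_payoff c q \<delta> \<nu>"
    by (simp add: smoothed_payoff_def)
qed (use integrable_smoothed_payoff[OF assms(1,2,5)] integrable_profit_integrand[OF assms(1,2,5)]
    in auto)

lemma integral_smoothed_payoff_le_profit:
  assumes "compact V" "continuous_on V c" "\<forall>v\<in>V. v - c v \<ge> 0" "\<delta> > 0" "P \<in> DeltaDelta V"
  shows "(\<integral>\<nu>. smoothed_payoff c q \<delta> \<nu> \<partial>P) \<le> profit c (q - \<delta>) P + \<delta>"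
proof -
  interpret prob_space P using assms(5) by (simp add: DeltaDelta_def)
  let ?f = "\<lambda>\<nu>. if q - \<delta> \<le> (\<integral>v. v \<partial>\<nu>) then q - \<delta> - (\<integral>v. c v \<partial>\<nu>) else 0"
  have "(\<integral>\<nu>. smoothed_payoff c q \<delta> \<nu> \<partial>P) \<le> (\<integral>\<nu>. ?f \<nu> + \<delta> \<partial>P)"
  proof (rule integral_mono)
    fix \<nu> assume "\<nu> \<in> space P"
    then have "\<nu> \<in> Delta V" by (simp add: space_DeltaDelta[OF assms(5)])
    from ramp_payoff_bounds(2)[OF integral_cost_le_integral_value[OF assms(1-3) this] assms(4)]
    show "smoothed_payoff c q \<delta> \<nu> \<le> ?f \<nu> + \<delta>"
      by (simp add: smoothed_payoff_def)
  qed (use integrable_smoothed_payoff[OF assms(1,2,5)] integrable_profit_integrand[OF assms(1,2,5)]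
      in auto)
  also have "\<dots> = profit c (q - \<delta>) P + \<delta>"
    using integrable_profit_integrand[OF assms(1,2,5)]
    by (simp add: profit_eq_integral prob_space)
  finally show ?thesis .
qed

lemma tendsto_integral_smoothed_payoff:
  assumes "compact V" "continuous_on V c" "weak_conv_DD V P Q"
  shows "(\<lambda>n. \<integral>\<nu>. smoothed_payoff c q \<delta> \<nu> \<partial>P n) \<longlonglongrightarrow> (\<integral>\<nu>. smoothed_payoff c q \<delta> \<nu> \<partial>Q)"
proof -
  obtain B where "\<And>\<nu>. \<nu> \<in> Delta V \<Longrightarrow> \<bar>smoothed_payoff c q \<delta> \<nu>\<bar> \<le> B"
    using bounded_smoothed_payoff[OF assms(1,2)] by blast
  then show ?thesis
    using assms(3) continuous_map_smoothed_payoff[OF assms(2)]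
    unfolding weak_conv_DD_def topspace_weak_top_Delta by blast
qed

lemma ereal_diff_le_of_le_add: "L \<le> ereal (a + d) \<Longrightarrow> L - ereal d \<le> ereal a"
  by (cases L) auto

theorem lemmaH1:
  fixes V :: "real set" and c :: "real \<Rightarrow> real"
    and P :: "nat \<Rightarrow> real measure measure" and Pstar :: "real measure measure"
    and p \<delta> :: real
  assumes "compact V"
    and "continuous_on V c"
    and "\<forall>v\<in>V. v - c v \<ge> 0"
    and "\<forall>n. P n \<in> DeltaDelta V"
    and "Pstar \<in> DeltaDelta V"
    and "weak_conv_DD V P Pstar"
    and "\<delta> > 0"
  shows "limsup (\<lambda>n. ereal (profit c (p + \<delta>) (P n))) - ereal \<delta> \<le> ereal (profit c p Pstar)
       \<and> ereal (profit c p Pstar) \<le> liminf (\<lambda>n. ereal (profit c (p - \<delta>) (P n))) + ereal \<delta>"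
proof
  let ?I = "\<lambda>q Q. \<integral>\<nu>. smoothed_payoff c q \<delta> \<nu> \<partial>Q"
  note lim = tendsto_integral_smoothed_payoff[OF assms(1,2,6)]
  note lower = profit_le_integral_smoothed_payoff[OF assms(1-3,7)]
  note upper = integral_smoothed_payoff_le_profit[OF assms(1-3,7)]
  have "limsup (\<lambda>n. ereal (profit c (p + \<delta>) (P n))) \<le> limsup (\<lambda>n. ereal (?I (p + \<delta>) (P n)))"
    using lower assms(4) by (intro Limsup_mono always_eventually) simp
  also have "\<dots> = ereal (?I (p + \<delta>) Pstar)"
    using lim by (intro lim_imp_Limsup) auto
  also have "\<dots> \<le> ereal (profit c p Pstar + \<delta>)"
    using upper[OF assms(5), of "p + \<delta>"] by simp
  finally show "limsup (\<lambda>n. ereal (profit c (p + \<delta>) (P n))) - ereal \<delta> \<le> ereal (profit c p Pstar)"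
    by (rule ereal_diff_le_of_le_add)
  have "ereal (profit c p Pstar) \<le> ereal (?I p Pstar)"
    using lower[OF assms(5)] by simp
  also have "\<dots> = liminf (\<lambda>n. ereal (?I p (P n)))"
    using lim by (intro lim_imp_Liminf[symmetric]) auto
  also have "\<dots> \<le> liminf (\<lambda>n. ereal (profit c (p - \<delta>) (P n)) + ereal \<delta>)"
    using upper assms(4) by (intro Liminf_mono always_eventually) simp
  also have "\<dots> = liminf (\<lambda>n. ereal (profit c (p - \<delta>) (P n))) + ereal \<delta>"
    by (rule Liminf_add_ereal_right) auto
  finally show "ereal (profit c p Pstar) \<le> liminf (\<lambda>n. ereal (profit c (p - \<delta>) (P n))) + ereal \<delta>" .
qed

end
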